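(* Let $(m_n)_{n\ge0}$ be a sequence of positive reals and $M_n:=\sum_{i=0}^n m_i$. Let $(A_n)_{n\ge0}$ be positive real random variables with $A_0\le m_0$ such that for every $n\ge0$, conditionally on $A_0,\dots,A_n$, $A_{n+1}=A_n+m_{n+1}$ with probability $A_n/M_n$ and $A_{n+1}=A_n$ with probability $(M_n-A_n)/M_n$. (a) If $\sum_{n\ge0}m_n^2/M_n^2<\infty$, then almost surely, for every $a\ge0$ and $t\ge0$, $$\mathbb P\Big(\sup_{i\ge a}\Big|\frac{A_i}{M_i}-\frac{A_a}{M_a}\Big|>t\frac{A_a}{M_a}\,\Big|\,A_a\Big)\le 2\exp\left(-\frac{\frac{t^2}{4}\frac{A_a}{M_a}}{\sum_{n>a}\frac{m_n^2}{M_n^2}+t\max\Big(\sum_{n>a}\frac{m_n^2}{M_n^2},\ \max_{n>a}\frac{m_n}{M_n}\Big)}\right).$$ (b) If $(m_n)_{n\ge0}$ is bounded, then almost surely, for every $a\ge0$ and $t\ge0$, $$\mathbb P\Big(\sup_{i\ge a}\Big|\frac{A_i}{M_i}-\frac{A_a}{M_a}\Big|>t\frac{A_a}{M_a}\,\Big|\,A_a\Big)\le 2\exp\left(-\frac{t^2}{4(1+t)}\,\frac{A_a}{\max_{n>a}m_n}\right).$$ *)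

theory Defs
  imports "HOL-Probability.Probability"
begin

definition gen_alg :: "'w measure \<Rightarrow> ('i \<Rightarrow> 'w \<Rightarrow> real) \<Rightarrow> 'i set \<Rightarrow> 'w measure" where
  "gen_alg P X I = sigma (space P) {X i -` B \<inter> space P | i B. i \<in> I \<and> B \<in> sets borel}"

definition cond_prob :: "'w measure \<Rightarrow> 'w measure \<Rightarrow> 'w set \<Rightarrow> 'w \<Rightarrow> real" where
  "cond_prob P F E = real_cond_exp P F (indicator E)"

end

theory Submission
  imports Defs
begin

(* Writing X n = A n / Ms n and c n = m n / Ms n, the process X is a martingale whose
   increment at step n + 1 is c (n+1) * (1 - X n) with probability X n and - c (n+1) * X n
   otherwise.  Hence for |l| * c k \<le> 1 the process
     W n = exp (l * (X n - X a) - l^2 * \<Sum>k\<in>{a<..n}. c k^2 * X (k - 1))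
   is a supermartingale.  As long as X has not left [(1 - t) X a, (1 + t) X a] the compensator
   is at most (1 + t) * X a * \<Sum>k>a. c k^2, so Doob's maximal inequality for W and for its
   mirror image with -l, optimised at l = t / (2 D), bounds the probability of a deviation
   t * X a on every event of the past up to time a by 2 exp (- t^2 X a / (4 D)). *)

lemma exp_le_one_plus_plus_square:
  fixes y :: real
  assumes "y \<le> 1"
  shows "exp y \<le> 1 + y + y\<^sup>2"
proof (cases "y \<ge> 0")
  case True
  thus ?thesis using exp_bound[of y] assms by (simp add: power2_eq_square)
next
  case False
  define u where "u = - y"
  have u: "u > 0" using False u_def by simp
  show ?thesis
  proof (cases "u \<ge> 1")
    case True
    have "0 \<le> (-y) * (-y - 1)" using True u_def by (intro mult_nonneg_nonneg) auto
    hence "1 \<le> 1 + y + y\<^sup>2" by (simp add: power2_eq_square algebra_simps)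
    thus ?thesis using False by (meson exp_le_one_iff not_le order_trans less_imp_le)
  next
    case False
    have "(1 - u + u\<^sup>2) * (1 + u + u\<^sup>2/2) = 1 + u\<^sup>2/2 + u^3/2 + u^4/2"
      by (simp add: field_simps power2_eq_square power3_eq_cube power4_eq_xxxx)
    hence "1 \<le> (1 - u + u\<^sup>2) * (1 + u + u\<^sup>2/2)" using u by simp
    also have "\<dots> \<le> (1 - u + u\<^sup>2) * exp u"
      using exp_lower_Taylor_quadratic[of u] u False by (intro mult_left_mono) auto
    finally have "exp (-u) \<le> 1 - u + u\<^sup>2" by (simp add: exp_minus field_simps)
    thus ?thesis using u_def by simp
  qed
qed

text \<open>A centred two-point variable with values \<open>q (1 - x)\<close> (probability \<open>x\<close>) and \<open>- q x\<close>
  has variance at most \<open>q\<^sup>2 x\<close>; this is its exponential moment bound.\<close>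

lemma two_point_exp_moment_le:
  fixes x q l :: real
  assumes "0 \<le> x" "x \<le> 1" "0 \<le> q" "\<bar>l\<bar> * q \<le> 1"
  shows "x * exp (l * q * (1 - x) - l\<^sup>2 * q\<^sup>2 * x)
           + (1 - x) * exp (- (l * q * x) - l\<^sup>2 * q\<^sup>2 * x) \<le> 1"
proof -
  have up: "\<bar>l * q * (1 - x)\<bar> \<le> 1" and down: "\<bar>l * q * x\<bar> \<le> 1"
    using assms mult_left_le[of "1 - x" "\<bar>l\<bar> * q"] mult_left_le[of x "\<bar>l\<bar> * q"]
    by (auto simp: abs_mult)
  have "x * exp (l * q * (1 - x)) + (1 - x) * exp (- (l * q * x))
      \<le> x * (1 + l * q * (1 - x) + (l * q * (1 - x))\<^sup>2)
        + (1 - x) * (1 + (- (l * q * x)) + (- (l * q * x))\<^sup>2)"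
    using assms up down
    by (intro add_mono mult_left_mono exp_le_one_plus_plus_square) auto
  also have "\<dots> = 1 + l\<^sup>2 * q\<^sup>2 * x * (1 - x)"
    by (simp add: algebra_simps power2_eq_square)
  also have "\<dots> \<le> 1 + l\<^sup>2 * q\<^sup>2 * x"
    using assms by (simp add: mult_left_le)
  also have "\<dots> \<le> exp (l\<^sup>2 * q\<^sup>2 * x)" by simp
  finally have "exp (- (l\<^sup>2 * q\<^sup>2 * x))
      * (x * exp (l * q * (1 - x)) + (1 - x) * exp (- (l * q * x)))
      \<le> exp (- (l\<^sup>2 * q\<^sup>2 * x)) * exp (l\<^sup>2 * q\<^sup>2 * x)"
    by (rule mult_left_mono) simp
  also have "\<dots> = 1" by (simp add: exp_minus)
  also have "exp (- (l\<^sup>2 * q\<^sup>2 * x))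
      * (x * exp (l * q * (1 - x)) + (1 - x) * exp (- (l * q * x)))
    = x * exp (l * q * (1 - x) - l\<^sup>2 * q\<^sup>2 * x)
      + (1 - x) * exp (- (l * q * x) - l\<^sup>2 * q\<^sup>2 * x)"
    by (simp add: exp_diff exp_minus exp_add field_simps)
  finally show ?thesis .
qed

lemma deviation_parameters:
  fixes t S b D :: real
  assumes t: "0 \<le> t" and S: "0 \<le> S" and D: "D = S + t * max S b" "0 < D"
  shows "t / (2 * D) * b \<le> 1"
    and "t\<^sup>2 / (4 * D) \<le> t / (2 * D) * t - (t / (2 * D))\<^sup>2 * (1 + t) * S"
proof -
  show "t / (2 * D) * b \<le> 1"
  proof (cases "b \<le> 0")
    case True
    have "t / (2 * D) * b \<le> 0" using True t D by (intro mult_nonneg_nonpos) auto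
    thus ?thesis by simp
  next
    case False
    hence "t * b \<le> D" using t S D mult_left_mono[of b "max S b" t] by auto
    thus ?thesis using D by (simp add: field_simps)
  qed
  have "t\<^sup>2 * ((1 + t) * S) \<le> t\<^sup>2 * D"
    using t D mult_left_mono[of S "max S b" t] by (intro mult_left_mono) (auto simp: algebra_simps)
  hence "t\<^sup>2 * ((1 + t) * S) / (4 * D\<^sup>2) \<le> t\<^sup>2 * D / (4 * D\<^sup>2)"
    by (rule divide_right_mono) simp
  moreover have "t / (2 * D) * t - (t / (2 * D))\<^sup>2 * (1 + t) * S
      = t\<^sup>2 / (2 * D) - t\<^sup>2 * ((1 + t) * S) / (4 * D\<^sup>2)"
    using D(2) by (simp add: field_simps power2_eq_square)
  moreover have "t\<^sup>2 * D / (4 * D\<^sup>2) = t\<^sup>2 / (4 * D)" and "t\<^sup>2 / (2 * D) = 2 * (t\<^sup>2 / (4 * D))"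
    using D(2) by (simp_all add: field_simps power2_eq_square)
  ultimately show "t\<^sup>2 / (4 * D) \<le> t / (2 * D) * t - (t / (2 * D))\<^sup>2 * (1 + t) * S"
    by linarith
qed

lemma space_gen_alg [simp]: "space (gen_alg P X I) = space P"
  unfolding gen_alg_def by (rule space_measure_of) auto

lemma sets_gen_alg:
  "sets (gen_alg P X I) = sigma_sets (space P) {X i -` B \<inter> space P | i B. i \<in> I \<and> B \<in> sets borel}"
  unfolding gen_alg_def by (rule sets_measure_of) auto

lemma sets_gen_alg_subset:
  assumes "\<And>i. i \<in> I \<Longrightarrow> X i \<in> borel_measurable P"
  shows "sets (gen_alg P X I) \<subseteq> sets P"
  unfolding sets_gen_alg
  by (rule sets.sigma_sets_subset) (use assms measurable_sets in blast)

lemma sets_gen_alg_mono: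
  assumes "I \<subseteq> J"
  shows "sets (gen_alg P X I) \<subseteq> sets (gen_alg P X J)"
  unfolding sets_gen_alg by (rule sigma_sets_mono') (use assms in auto)

lemma measurable_gen_alg:
  assumes "i \<in> I"
  shows "X i \<in> borel_measurable (gen_alg P X I)"
proof (rule measurableI)
  fix B :: "real set"
  assume "B \<in> sets borel"
  thus "X i -` B \<inter> space (gen_alg P X I) \<in> sets (gen_alg P X I)"
    unfolding sets_gen_alg space_gen_alg using assms by (intro sigma_sets.Basic) blast
qed simp

lemma sigma_finite_subalgebra_gen_alg:
  assumes "prob_space P" "\<And>i. i \<in> I \<Longrightarrow> X i \<in> borel_measurable P"
  shows "sigma_finite_subalgebra P (gen_alg P X I)"
proof -
  interpret prob_space P by fact
  have "finite_measure_subalgebra P (gen_alg P X I)"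
    unfolding finite_measure_subalgebra_def finite_measure_subalgebra_axioms_def subalgebra_def
    using sets_gen_alg_subset[OF assms(2)] finite_measure_axioms by simp
  thus ?thesis by (rule finite_measure_subalgebra_is_sigma_finite)
qed

lemma measurable_from_sets_subset:
  assumes "sets F \<subseteq> sets M" "space F = space M" "f \<in> borel_measurable F"
  shows "f \<in> borel_measurable M"
  by (rule measurable_from_subalg[of M F]) (use assms in \<open>simp_all add: subalgebra_def\<close>)

lemma AE_le_of_integral_le_on_exceedance:
  fixes h g :: "'a \<Rightarrow> real"
  assumes C_def: "C = {x \<in> space M. g x < h x}"
    and h_int: "integrable M (\<lambda>x. indicator C x * h x)"
    and g_int: "integrable M (\<lambda>x. indicator C x * g x)"
    and le: "(\<integral>x. indicator C x * h x \<partial>M) \<le> (\<integral>x. indicator C x * g x \<partial>M)"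
  shows "AE x in M. h x \<le> g x"
proof -
  define \<phi> where "\<phi> x = indicator C x * h x - indicator C x * g x" for x
  have \<phi>_int: "integrable M \<phi>" unfolding \<phi>_def using h_int g_int by simp
  have \<phi>_nonneg: "AE x in M. 0 \<le> \<phi> x"
    by (rule AE_I2) (auto simp: \<phi>_def C_def indicator_def)
  have "(\<integral>x. \<phi> x \<partial>M) \<le> 0" unfolding \<phi>_def using h_int g_int le by simp
  hence "(\<integral>x. \<phi> x \<partial>M) = 0" using integral_nonneg_AE[OF \<phi>_nonneg] by linarith
  hence "AE x in M. \<phi> x = 0" using integral_nonneg_eq_0_iff_AE[OF \<phi>_int \<phi>_nonneg] by simp
  with AE_space show ?thesis
    by eventually_elim (auto simp: \<phi>_def C_def indicator_def split: if_splits)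
qed

lemma real_cond_exp_indicator_le:
  assumes "sigma_finite_subalgebra M G" "finite_measure M"
    and E[measurable]: "E \<in> sets M"
    and g_G: "g \<in> borel_measurable G" and g_int: "integrable M g"
    and le: "\<And>B. B \<in> sets G \<Longrightarrow> measure M (B \<inter> E) \<le> (\<integral>x. indicator B x * g x \<partial>M)"
  shows "AE x in M. real_cond_exp M G (indicator E) x \<le> g x"
proof -
  interpret S: sigma_finite_subalgebra M G by fact
  interpret finite_measure M by fact
  have sub: "sets G \<subseteq> sets M" "space G = space M" using S.subalg by (auto simp: subalgebra_def)
  define h where "h = real_cond_exp M G (indicator E)"
  define C where "C = {x \<in> space M. g x < h x}"
  have C_G: "C \<in> sets G"
  proof -
    have "{x \<in> space G. g x < h x} \<in> sets G" using g_G unfolding h_def by measurable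
    thus ?thesis unfolding C_def using sub by simp
  qed
  have [measurable]: "C \<in> sets M" using C_G sub by auto
  have CE_int: "integrable M (\<lambda>x. indicator C x * indicator E x :: real)"
    by (rule integrable_const_bound[where B=1]) (auto simp: indicator_def)
  have ind_C_G: "indicator C \<in> borel_measurable G" using C_G by measurable
  have h_int: "integrable M (\<lambda>x. indicator C x * h x)"
    and h_eq: "(\<integral>x. indicator C x * h x \<partial>M) = (\<integral>x. indicator C x * indicator E x \<partial>M)"
    unfolding h_def by (rule S.real_cond_exp_intg[OF CE_int ind_C_G]; simp)+
  have "(\<integral>x. indicator C x * h x \<partial>M) = measure M (C \<inter> E)"
    by (simp add: h_eq indicator_inter_arith[symmetric])
  also have "\<dots> \<le> (\<integral>x. indicator C x * g x \<partial>M)" using le[OF C_G] .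
  finally have "(\<integral>x. indicator C x * h x \<partial>M) \<le> (\<integral>x. indicator C x * g x \<partial>M)" .
  moreover have "integrable M (\<lambda>x. indicator C x * g x)"
    using integrable_mult_indicator[OF _ g_int] by simp
  ultimately show ?thesis
    using AE_le_of_integral_le_on_exceedance[OF C_def h_int] unfolding h_def by blast
qed

lemma integral_indicator_eq_by_cond_exp:
  assumes "sigma_finite_subalgebra M G"
    and u: "AE x in M. real_cond_exp M G (indicator E) x = u x" "u \<in> borel_measurable M"
    and f_G: "f \<in> borel_measurable G" and fE_int: "integrable M (\<lambda>x. f x * indicator E x)"
    and E[measurable]: "E \<in> sets M"
  shows "integrable M (\<lambda>x. f x * u x)"
    and "(\<integral>x. f x * indicator E x \<partial>M) = (\<integral>x. f x * u x \<partial>M)"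
proof -
  interpret S: sigma_finite_subalgebra M G by fact
  have f_M[measurable]: "f \<in> borel_measurable M"
    by (rule measurable_from_subalg[OF S.subalg f_G])
  have ce: "integrable M (\<lambda>x. f x * real_cond_exp M G (indicator E) x)"
    "(\<integral>x. f x * real_cond_exp M G (indicator E) x \<partial>M) = (\<integral>x. f x * indicator E x \<partial>M)"
    by (rule S.real_cond_exp_intg[OF fE_int f_G]; simp)+
  have eq: "AE x in M. f x * real_cond_exp M G (indicator E) x = f x * u x"
    using u(1) by eventually_elim simp
  show "integrable M (\<lambda>x. f x * u x)"
    by (rule integrable_cong_AE_imp[OF ce(1) _ eq]) (use u(2) in measurable)
  show "(\<integral>x. f x * indicator E x \<partial>M) = (\<integral>x. f x * u x \<partial>M)"
    using ce(2) integral_cong_AE[OF _ _ eq] u(2) by simp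
qed

section \<open>The urn process\<close>

locale urn_process =
  fixes P :: "'w measure" and A :: "nat \<Rightarrow> 'w \<Rightarrow> real"
    and m :: "nat \<Rightarrow> real" and Ms :: "nat \<Rightarrow> real"
  assumes prob: "prob_space P"
    and m_pos: "\<And>n. m n > 0"
    and Ms_def: "\<And>n. Ms n = (\<Sum>i\<le>n. m i)"
    and A_meas[measurable]: "\<And>n. A n \<in> borel_measurable P"
    and A_pos: "\<And>n x. x \<in> space P \<Longrightarrow> A n x > 0"
    and step: "\<And>n. AE x in P.
        cond_prob P (gen_alg P A {..n}) {y \<in> space P. A (Suc n) y = A n y + m (Suc n)} x
          = A n x / Ms n
      \<and> cond_prob P (gen_alg P A {..n}) {y \<in> space P. A (Suc n) y = A n y} x
          = (Ms n - A n x) / Ms n"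
begin

sublocale prob_space P by (rule prob)

definition "F n = gen_alg P A {..n}"
definition "X n x = A n x / Ms n"
definition "c n = m n / Ms n"
definition "E_grow n = {y \<in> space P. A (Suc n) y = A n y + m (Suc n)}"
definition "E_stay n = {y \<in> space P. A (Suc n) y = A n y}"

text \<open>\<open>X n \<le> 1\<close> holds only almost surely; truncating makes the exponential processes
  below bounded everywhere, hence integrable.\<close>
definition "Xc n x = min (X n x) 1"

lemma Ms_pos: "Ms n > 0"
  unfolding Ms_def using m_pos by (intro sum_pos) auto

lemma Ms_Suc: "Ms (Suc n) = Ms n + m (Suc n)"
  unfolding Ms_def by simp

lemma Ms_mono: "k \<le> n \<Longrightarrow> Ms k \<le> Ms n"
  unfolding Ms_def using m_pos by (intro sum_mono2) (auto intro: less_imp_le)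

lemma m_le_Ms: "m n \<le> Ms n"
  unfolding Ms_def using m_pos by (intro member_le_sum) (auto intro: less_imp_le)

lemma c_pos: "c n > 0"
  unfolding c_def using m_pos Ms_pos by simp

lemma c_le_1: "c n \<le> 1"
  unfolding c_def using m_le_Ms Ms_pos by simp

lemma space_F [simp]: "space (F n) = space P"
  unfolding F_def by simp

lemma sets_F_subset: "sets (F n) \<subseteq> sets P"
  unfolding F_def by (rule sets_gen_alg_subset) simp

lemma sets_F_mono: "k \<le> n \<Longrightarrow> sets (F k) \<subseteq> sets (F n)"
  unfolding F_def by (rule sets_gen_alg_mono) auto

lemma sigma_finite_subalgebra_F: "sigma_finite_subalgebra P (F n)"
  unfolding F_def by (rule sigma_finite_subalgebra_gen_alg[OF prob]) simp

lemma space_P_sets_F [measurable]: "space P \<in> sets (F n)"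
  using sets.top[of "F n"] by simp

lemma measurable_F_imp_measurable: "f \<in> borel_measurable (F n) \<Longrightarrow> f \<in> borel_measurable P"
  by (rule measurable_from_sets_subset[OF sets_F_subset]) simp_all

lemma X_measurable_F: "i \<le> n \<Longrightarrow> X i \<in> borel_measurable (F n)"
  unfolding X_def F_def using measurable_gen_alg[of i "{..n}" A P]
  by (intro borel_measurable_divide) auto

lemma Xc_measurable_F: "i \<le> n \<Longrightarrow> Xc i \<in> borel_measurable (F n)"
  unfolding Xc_def using X_measurable_F[of i n] by (intro borel_measurable_min) auto

lemma X_measurable [measurable]: "X i \<in> borel_measurable P"
  unfolding X_def by measurable

lemma Xc_measurable [measurable]: "Xc i \<in> borel_measurable P"
  unfolding Xc_def by measurable

lemma E_grow_sets [measurable]: "E_grow n \<in> sets P"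
  unfolding E_grow_def by measurable

lemma E_stay_sets [measurable]: "E_stay n \<in> sets P"
  unfolding E_stay_def by measurable

lemma X_pos: "x \<in> space P \<Longrightarrow> X n x > 0"
  unfolding X_def using A_pos Ms_pos by simp

lemma Xc_pos: "x \<in> space P \<Longrightarrow> Xc n x > 0"
  unfolding Xc_def using X_pos by simp

lemma Xc_le_1: "Xc n x \<le> 1"
  unfolding Xc_def by simp

lemma E_grow_E_stay_disjoint: "E_grow n \<inter> E_stay n = {}"
  unfolding E_grow_def E_stay_def using m_pos[of "Suc n"] by auto

lemma X_Suc_on_E_grow: "x \<in> E_grow n \<Longrightarrow> X (Suc n) x - X n x = c (Suc n) * (1 - X n x)"
  unfolding E_grow_def X_def c_def using Ms_pos[of n] Ms_pos[of "Suc n"] Ms_Suc[of n]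
  by (auto simp: field_simps)

lemma X_Suc_on_E_stay: "x \<in> E_stay n \<Longrightarrow> X (Suc n) x - X n x = - (c (Suc n) * X n x)"
  unfolding E_stay_def X_def c_def using Ms_pos[of n] Ms_pos[of "Suc n"] Ms_Suc[of n]
  by (auto simp: field_simps)

lemma step_integral:
  assumes f: "f \<in> borel_measurable (F n)" and bnd: "\<And>x. x \<in> space P \<Longrightarrow> \<bar>f x\<bar> \<le> K"
  shows "integrable P (\<lambda>x. f x * X n x)"
    and "(\<integral>x. f x * indicator (E_grow n) x \<partial>P) = (\<integral>x. f x * X n x \<partial>P)"
    and "integrable P (\<lambda>x. f x * (1 - X n x))"
    and "(\<integral>x. f x * indicator (E_stay n) x \<partial>P) = (\<integral>x. f x * (1 - X n x) \<partial>P)"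
proof -
  have [measurable]: "f \<in> borel_measurable P" using f by (rule measurable_F_imp_measurable)
  have ce: "AE x in P. real_cond_exp P (F n) (indicator (E_grow n)) x = X n x
        \<and> real_cond_exp P (F n) (indicator (E_stay n)) x = 1 - X n x"
    using step[of n]
  proof eventually_elim
    case (elim x)
    have "(Ms n - A n x) / Ms n = 1 - X n x"
      using Ms_pos[of n] by (simp add: X_def diff_divide_distrib)
    with elim show ?case unfolding cond_prob_def E_grow_def E_stay_def F_def X_def by simp
  qed
  have f_int: "integrable P f" by (rule integrable_const_bound[where B=K]) (auto simp: bnd)
  have ce_grow: "AE x in P. real_cond_exp P (F n) (indicator (E_grow n)) x = X n x"
    and ce_stay: "AE x in P. real_cond_exp P (F n) (indicator (E_stay n)) x = 1 - X n x"
    using ce by auto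
  show "integrable P (\<lambda>x. f x * X n x)"
    and "(\<integral>x. f x * indicator (E_grow n) x \<partial>P) = (\<integral>x. f x * X n x \<partial>P)"
    by (rule integral_indicator_eq_by_cond_exp[OF sigma_finite_subalgebra_F ce_grow _ f
          integrable_real_mult_indicator[OF E_grow_sets f_int]]; simp)+
  show "integrable P (\<lambda>x. f x * (1 - X n x))"
    and "(\<integral>x. f x * indicator (E_stay n) x \<partial>P) = (\<integral>x. f x * (1 - X n x) \<partial>P)"
    by (rule integral_indicator_eq_by_cond_exp[OF sigma_finite_subalgebra_F ce_stay _ f
          integrable_real_mult_indicator[OF E_stay_sets f_int]]; simp)+
qed

lemma step_integral_mixture:
  assumes u_F: "u \<in> borel_measurable (F n)" and u: "\<And>x. x \<in> space P \<Longrightarrow> \<bar>u x\<bar> \<le> K"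
    and v_F: "v \<in> borel_measurable (F n)" and v: "\<And>x. x \<in> space P \<Longrightarrow> \<bar>v x\<bar> \<le> K"
  shows "integrable P (\<lambda>x. u x * X n x + v x * (1 - X n x))"
    and "(\<integral>x. u x * indicator (E_grow n) x + v x * indicator (E_stay n) x \<partial>P)
      = (\<integral>x. u x * X n x + v x * (1 - X n x) \<partial>P)"
proof -
  note su = step_integral[OF u_F u] and sv = step_integral[OF v_F v]
  have "integrable P u" "integrable P v"
    using u v measurable_F_imp_measurable[OF u_F] measurable_F_imp_measurable[OF v_F]
    by (auto intro: integrable_const_bound[where B=K])
  hence "(\<integral>x. u x * indicator (E_grow n) x + v x * indicator (E_stay n) x \<partial>P)
      = (\<integral>x. u x * X n x \<partial>P) + (\<integral>x. v x * (1 - X n x) \<partial>P)"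
    using su(2) sv(4) integrable_real_mult_indicator[OF E_grow_sets]
      integrable_real_mult_indicator[OF E_stay_sets]
    by simp
  also have "\<dots> = (\<integral>x. u x * X n x + v x * (1 - X n x) \<partial>P)"
    using su(1) sv(3) by simp
  finally show "(\<integral>x. u x * indicator (E_grow n) x + v x * indicator (E_stay n) x \<partial>P)
      = (\<integral>x. u x * X n x + v x * (1 - X n x) \<partial>P)" .
  show "integrable P (\<lambda>x. u x * X n x + v x * (1 - X n x))"
    using su(1) sv(3) by simp
qed

lemma AE_E_grow_or_E_stay: "AE x in P. x \<in> E_grow n \<union> E_stay n"
proof -
  note s = step_integral[of "\<lambda>_. 1" n 1]
  have "(\<integral>x. 1 - X n x \<partial>P) = 1 - (\<integral>x. X n x \<partial>P)"
    using s(1) by (simp add: prob_space)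
  hence "measure P (E_grow n \<union> E_stay n) = 1"
    using s(2,4) E_grow_E_stay_disjoint[of n] by (subst finite_measure_Union) auto
  thus ?thesis by (subst AE_in_set_eq_1) auto
qed

lemma AE_X_le_1: "AE x in P. X n x \<le> 1"
proof -
  define C where "C = {x \<in> space P. 1 < X n x}"
  have C_F: "C \<in> sets (F n)" unfolding C_def using X_measurable_F[of n n] by measurable
  hence [measurable]: "C \<in> sets P" using sets_F_subset by auto
  have ind_F: "indicator C \<in> borel_measurable (F n)" using C_F by measurable
  note s = step_integral[OF ind_F, of 1]
  have "0 \<le> (\<integral>x. indicator C x * indicator (E_stay n) x \<partial>P :: real)"
    by (rule integral_nonneg_AE) (auto simp: indicator_def)
  hence "0 \<le> (\<integral>x. indicator C x * (1 - X n x) \<partial>P)" using s(4) by simp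
  moreover have "integrable P (\<lambda>x. indicator C x * (1::real))"
    using integrable_real_mult_indicator[OF \<open>C \<in> sets P\<close>, of "\<lambda>_. 1"] by simp
  ultimately show ?thesis
    using s(1) by (intro AE_le_of_integral_le_on_exceedance[of C P "\<lambda>_. 1" "X n"])
      (auto simp: C_def algebra_simps)
qed

lemma AE_Xc_eq_X: "AE x in P. \<forall>n. Xc n x = X n x"
proof -
  have "AE x in P. \<forall>n. X n x \<le> 1" by (subst AE_all_countable) (simp add: AE_X_le_1)
  thus ?thesis by eventually_elim (simp add: Xc_def)
qed

subsection \<open>An exponential supermartingale\<close>

definition "V a n x = (\<Sum>k\<in>{a<..n}. (c k)\<^sup>2 * Xc (k - 1) x)"
definition "W a l \<mu> n x = exp (l * (Xc n x - Xc a x) - l\<^sup>2 * V a n x - \<mu> * Xc a x)"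

text \<open>The factor \<open>W (Suc n) / W n\<close> on \<open>E_grow n\<close> and on \<open>E_stay n\<close>, respectively.\<close>
definition "grow_factor l n x =
  exp (l * c (Suc n) * (1 - Xc n x) - l\<^sup>2 * (c (Suc n))\<^sup>2 * Xc n x)"
definition "stay_factor l n x =
  exp (- (l * c (Suc n) * Xc n x) - l\<^sup>2 * (c (Suc n))\<^sup>2 * Xc n x)"

lemma V_measurable_F: "V a n \<in> borel_measurable (F n)"
  unfolding V_def using Xc_measurable_F
  by (intro borel_measurable_sum borel_measurable_times) auto

lemma W_measurable_F: "a \<le> n \<Longrightarrow> W a l \<mu> n \<in> borel_measurable (F n)"
  unfolding W_def using Xc_measurable_F[of n n] Xc_measurable_F[of a n] V_measurable_F[of a n]
  by measurable

lemma W_measurable_F_mono: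
  assumes "a \<le> i" "i \<le> k"
  shows "W a l \<mu> i \<in> borel_measurable (F k)"
  by (rule measurable_from_sets_subset[OF sets_F_mono[OF assms(2)] _ W_measurable_F[OF assms(1)]])
    simp

lemma W_measurable [measurable]: "a \<le> n \<Longrightarrow> W a l \<mu> n \<in> borel_measurable P"
  using W_measurable_F by (rule measurable_F_imp_measurable)

lemma V_nonneg: "x \<in> space P \<Longrightarrow> 0 \<le> V a n x"
  unfolding V_def using Xc_pos by (intro sum_nonneg) (simp add: less_imp_le)

lemma W_pos: "W a l \<mu> n x > 0"
  unfolding W_def by simp

lemma W_le: "x \<in> space P \<Longrightarrow> W a l \<mu> n x \<le> exp (\<bar>l\<bar> + \<bar>\<mu>\<bar>)"
proof -
  assume x: "x \<in> space P"
  have Xc: "0 < Xc n x" "Xc n x \<le> 1" "0 < Xc a x" "Xc a x \<le> 1"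
    using Xc_pos[OF x] Xc_le_1 by auto
  have "l * (Xc n x - Xc a x) \<le> \<bar>l\<bar> * \<bar>Xc n x - Xc a x\<bar>" by (metis abs_ge_self abs_mult)
  also have "\<dots> \<le> \<bar>l\<bar>" using Xc by (intro mult_left_le) auto
  finally have "l * (Xc n x - Xc a x) \<le> \<bar>l\<bar>" .
  moreover have "0 \<le> l\<^sup>2 * V a n x" using V_nonneg[OF x] by simp
  moreover have "- (\<mu> * Xc a x) \<le> \<bar>\<mu>\<bar>"
    using Xc mult_left_le[of "Xc a x" "\<bar>\<mu>\<bar>"]
      mult_right_mono[OF abs_ge_minus_self[of \<mu>], of "Xc a x"]
    by simp
  ultimately show ?thesis unfolding W_def by simp
qed

lemma W_start: "W a l \<mu> a x = exp (- (\<mu> * Xc a x))"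
  unfolding W_def V_def by simp

lemma W_Suc:
  assumes "a \<le> n"
  shows "W a l \<mu> (Suc n) x
    = W a l \<mu> n x * exp (l * (Xc (Suc n) x - Xc n x) - l\<^sup>2 * (c (Suc n))\<^sup>2 * Xc n x)"
proof -
  have "{a<..Suc n} = insert (Suc n) {a<..n}" using assms by auto
  hence "V a (Suc n) x = (c (Suc n))\<^sup>2 * Xc n x + V a n x" unfolding V_def by simp
  hence "l * (Xc (Suc n) x - Xc a x) - l\<^sup>2 * V a (Suc n) x - \<mu> * Xc a x
      = (l * (Xc n x - Xc a x) - l\<^sup>2 * V a n x - \<mu> * Xc a x)
        + (l * (Xc (Suc n) x - Xc n x) - l\<^sup>2 * (c (Suc n))\<^sup>2 * Xc n x)"
    by (simp add: algebra_simps)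
  thus ?thesis unfolding W_def by (simp only: exp_add)
qed

lemma integrable_indicator_W:
  assumes "a \<le> n" "G \<in> sets P"
  shows "integrable P (\<lambda>x. indicator G x * W a l \<mu> n x)"
  by (rule integrable_const_bound[where B="exp (\<bar>l\<bar> + \<bar>\<mu>\<bar>)"])
    (use assms W_le W_pos in \<open>auto simp: indicator_def less_imp_le\<close>)

lemma grow_factor_le_e:
  assumes "x \<in> space P" "\<bar>l\<bar> * c (Suc n) \<le> 1"
  shows "grow_factor l n x \<le> exp 1"
proof -
  have "l * c (Suc n) * (1 - Xc n x) \<le> \<bar>l * c (Suc n)\<bar> * \<bar>1 - Xc n x\<bar>"
    by (metis abs_ge_self abs_mult)
  also have "\<dots> \<le> 1"
    using Xc_pos[OF assms(1), of n] Xc_le_1[of n x] assms(2) c_pos[of "Suc n"]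
    by (intro mult_le_one) (auto simp: abs_mult)
  moreover have "0 \<le> l\<^sup>2 * (c (Suc n))\<^sup>2 * Xc n x"
    using Xc_pos[OF assms(1), of n] by simp
  ultimately show ?thesis
    unfolding grow_factor_def by simp
qed

lemma stay_factor_le_e:
  assumes "x \<in> space P" "\<bar>l\<bar> * c (Suc n) \<le> 1"
  shows "stay_factor l n x \<le> exp 1"
proof -
  have "- (l * c (Suc n) * Xc n x) \<le> \<bar>l * c (Suc n)\<bar> * \<bar>Xc n x\<bar>"
    by (metis abs_ge_minus_self abs_mult)
  also have "\<dots> \<le> 1"
    using Xc_pos[OF assms(1), of n] Xc_le_1[of n x] assms(2) c_pos[of "Suc n"]
    by (intro mult_le_one) (auto simp: abs_mult)
  moreover have "0 \<le> l\<^sup>2 * (c (Suc n))\<^sup>2 * Xc n x"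
    using Xc_pos[OF assms(1), of n] by simp
  ultimately show ?thesis
    unfolding stay_factor_def by simp
qed

lemma AE_W_Suc_eq:
  assumes "a \<le> n"
  shows "AE x in P. W a l \<mu> (Suc n) x = W a l \<mu> n x *
    (grow_factor l n x * indicator (E_grow n) x + stay_factor l n x * indicator (E_stay n) x)"
  using AE_E_grow_or_E_stay[of n] AE_Xc_eq_X
proof eventually_elim
  case (elim x)
  show ?case
  proof (cases "x \<in> E_grow n")
    case True
    hence "x \<notin> E_stay n" using E_grow_E_stay_disjoint by auto
    thus ?thesis using True elim X_Suc_on_E_grow[OF True]
      by (simp add: W_Suc[OF assms] grow_factor_def mult.assoc)
  next
    case False
    hence "x \<in> E_stay n" using elim by auto
    thus ?thesis using False elim X_Suc_on_E_stay[of x n]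
      by (simp add: W_Suc[OF assms] stay_factor_def mult.assoc)
  qed
qed

lemma AE_step_factor_mean_le_1:
  assumes "\<bar>l\<bar> * c (Suc n) \<le> 1"
  shows "AE x in P. X n x * grow_factor l n x + (1 - X n x) * stay_factor l n x \<le> 1"
  using AE_Xc_eq_X AE_space
proof eventually_elim
  case (elim x)
  hence "0 \<le> X n x" "X n x \<le> 1" using Xc_pos[of x n] Xc_le_1[of n x] by auto
  from two_point_exp_moment_le[OF this less_imp_le[OF c_pos] assms] elim
  show ?case by (simp add: grow_factor_def stay_factor_def power_mult_distrib)
qed

lemma abs_indicator_W_times_le:
  assumes "x \<in> space P" "0 \<le> y" "y \<le> exp 1"
  shows "\<bar>indicator G x * W a l \<mu> n x * y\<bar> \<le> exp (\<bar>l\<bar> + \<bar>\<mu>\<bar>) * exp 1"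
proof -
  have W: "0 \<le> indicator G x * W a l \<mu> n x" "indicator G x * W a l \<mu> n x \<le> exp (\<bar>l\<bar> + \<bar>\<mu>\<bar>)"
    using W_le[OF assms(1), of a l \<mu> n] W_pos[of a l \<mu> n x] by (auto simp: indicator_def)
  hence "\<bar>indicator G x * W a l \<mu> n x * y\<bar> = indicator G x * W a l \<mu> n x * y" using assms(2) by simp
  also have "\<dots> \<le> exp (\<bar>l\<bar> + \<bar>\<mu>\<bar>) * exp 1" using W assms(2,3) by (intro mult_mono) auto
  finally show ?thesis .
qed

lemma integral_indicator_W_Suc_le:
  assumes an: "a \<le> n" and G_F: "G \<in> sets (F n)" and lc: "\<bar>l\<bar> * c (Suc n) \<le> 1"
  shows "(\<integral>x. indicator G x * W a l \<mu> (Suc n) x \<partial>P) \<le> (\<integral>x. indicator G x * W a l \<mu> n x \<partial>P)"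
proof -
  have [measurable]: "G \<in> sets P" using G_F sets_F_subset by auto
  define f where "f x = indicator G x * W a l \<mu> n x" for x
  have f_F: "f \<in> borel_measurable (F n)"
    unfolding f_def using W_measurable_F[OF an] G_F by measurable
  have fg_F: "(\<lambda>x. f x * grow_factor l n x) \<in> borel_measurable (F n)"
    and fs_F: "(\<lambda>x. f x * stay_factor l n x) \<in> borel_measurable (F n)"
    unfolding grow_factor_def stay_factor_def using f_F Xc_measurable_F[of n n] by measurable
  have bounds: "\<bar>f x * grow_factor l n x\<bar> \<le> exp (\<bar>l\<bar> + \<bar>\<mu>\<bar>) * exp 1"
      "\<bar>f x * stay_factor l n x\<bar> \<le> exp (\<bar>l\<bar> + \<bar>\<mu>\<bar>) * exp 1" if "x \<in> space P" for x
    using abs_indicator_W_times_le[OF that] grow_factor_le_e[OF that lc] stay_factor_le_e[OF that lc]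
    unfolding f_def grow_factor_def stay_factor_def by simp_all
  note mix = step_integral_mixture[OF fg_F bounds(1) fs_F bounds(2)]
  have "(\<integral>x. indicator G x * W a l \<mu> (Suc n) x \<partial>P)
      = (\<integral>x. f x * grow_factor l n x * indicator (E_grow n) x
            + f x * stay_factor l n x * indicator (E_stay n) x \<partial>P)"
  proof (rule integral_cong_AE)
    have "a \<le> Suc n" using an by simp
    thus "(\<lambda>x. indicator G x * W a l \<mu> (Suc n) x) \<in> borel_measurable P" by measurable
    have [measurable]: "f \<in> borel_measurable P" using f_F by (rule measurable_F_imp_measurable)
    show "(\<lambda>x. f x * grow_factor l n x * indicator (E_grow n) x
            + f x * stay_factor l n x * indicator (E_stay n) x) \<in> borel_measurable P"
      unfolding grow_factor_def stay_factor_def by measurable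
    show "AE x in P. indicator G x * W a l \<mu> (Suc n) x
        = f x * grow_factor l n x * indicator (E_grow n) x
          + f x * stay_factor l n x * indicator (E_stay n) x"
      using AE_W_Suc_eq[OF an, of l \<mu>] by eventually_elim (simp add: f_def algebra_simps)
  qed
  also have "\<dots> = (\<integral>x. f x * grow_factor l n x * X n x + f x * stay_factor l n x * (1 - X n x) \<partial>P)"
    by (rule mix(2))
  also have "\<dots> \<le> (\<integral>x. f x \<partial>P)"
  proof (rule integral_mono_AE[OF mix(1)])
    show "integrable P f" unfolding f_def using integrable_indicator_W[OF an] by simp
    show "AE x in P. f x * grow_factor l n x * X n x + f x * stay_factor l n x * (1 - X n x) \<le> f x"
      using AE_step_factor_mean_le_1[OF lc]
    proof eventually_elim
      case (elim x)
      have "0 \<le> f x" unfolding f_def by (simp add: less_imp_le[OF W_pos])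
      from mult_left_mono[OF elim this] show ?case by (simp add: algebra_simps)
    qed
  qed
  finally show ?thesis unfolding f_def .
qed

subsection \<open>A maximal inequality\<close>

definition "hit a l \<mu> j = (\<Union>i\<in>{a..a + j}. {x \<in> space P. 1 \<le> W a l \<mu> i x})"

lemma hit_sets_F: "hit a l \<mu> j \<in> sets (F (a + j))"
  unfolding hit_def
proof (rule sets.finite_UN)
  fix i
  assume "i \<in> {a..a + j}"
  hence "W a l \<mu> i \<in> borel_measurable (F (a + j))" using W_measurable_F_mono by auto
  hence "{x \<in> space (F (a + j)). 1 \<le> W a l \<mu> i x} \<in> sets (F (a + j))" by measurable
  thus "{x \<in> space P. 1 \<le> W a l \<mu> i x} \<in> sets (F (a + j))" by simp
qed simp

lemma hit_sets [measurable]: "hit a l \<mu> j \<in> sets P"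
  using hit_sets_F sets_F_subset by blast

lemma hit_0: "hit a l \<mu> 0 = {x \<in> space P. 1 \<le> W a l \<mu> a x}"
  unfolding hit_def by simp

lemma hit_Suc: "hit a l \<mu> (Suc j) = hit a l \<mu> j \<union> {x \<in> space P. 1 \<le> W a l \<mu> (Suc (a + j)) x}"
  unfolding hit_def by (auto simp: atLeastAtMostSuc_conv)

lemma measure_le_integral_W:
  assumes "S \<in> sets P" "S \<subseteq> {x \<in> space P. 1 \<le> W a l \<mu> i x}" "a \<le> i"
  shows "measure P S \<le> (\<integral>x. indicator S x * W a l \<mu> i x \<partial>P)"
proof -
  have "measure P S = (\<integral>x. indicator S x \<partial>P)" using assms(1) by simp
  also have "\<dots> \<le> (\<integral>x. indicator S x * W a l \<mu> i x \<partial>P)"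
  proof (rule integral_mono)
    show "integrable P (indicator S :: 'w \<Rightarrow> real)"
      using integrable_real_mult_indicator[OF assms(1), of "\<lambda>_. 1"] by simp
    show "integrable P (\<lambda>x. indicator S x * W a l \<mu> i x)"
      by (rule integrable_indicator_W[OF assms(3,1)])
    show "indicator S x \<le> indicator S x * W a l \<mu> i x" for x
      using assms(2) by (auto simp: indicator_def)
  qed
  finally show ?thesis .
qed

lemma integral_indicator_W_split:
  assumes "S \<in> sets P" "T \<in> sets P" "a \<le> i"
  shows "(\<integral>x. indicator S x * W a l \<mu> i x \<partial>P)
    = (\<integral>x. indicator (S \<inter> T) x * W a l \<mu> i x \<partial>P) + (\<integral>x. indicator (S - T) x * W a l \<mu> i x \<partial>P)"
proof -
  have "(\<integral>x. indicator S x * W a l \<mu> i x \<partial>P)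
      = (\<integral>x. indicator (S \<inter> T) x * W a l \<mu> i x + indicator (S - T) x * W a l \<mu> i x \<partial>P)"
    by (rule Bochner_Integration.integral_cong) (auto simp: indicator_def)
  also have "\<dots> = (\<integral>x. indicator (S \<inter> T) x * W a l \<mu> i x \<partial>P)
      + (\<integral>x. indicator (S - T) x * W a l \<mu> i x \<partial>P)"
    using assms by (intro Bochner_Integration.integral_add integrable_indicator_W) auto
  finally show ?thesis .
qed

text \<open>Doob's maximal inequality for the supermartingale \<open>W\<close>, by induction along the
  time horizon: the part of \<open>B\<close> where \<open>W\<close> has already reached 1 is bounded by the
  \<open>W\<close>-mass it carried when absorbed.\<close>

lemma measure_hit_le:
  assumes B_F: "B \<in> sets (F a)" and lc: "\<And>n. a \<le> n \<Longrightarrow> \<bar>l\<bar> * c (Suc n) \<le> 1"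
  shows "measure P (B \<inter> hit a l \<mu> j)
      + (\<integral>x. indicator (B - hit a l \<mu> j) x * W a l \<mu> (a + j) x \<partial>P)
    \<le> (\<integral>x. indicator B x * W a l \<mu> a x \<partial>P)"
proof (induction j)
  case 0
  have B_P: "B \<in> sets P" using B_F sets_F_subset by auto
  have "measure P (B \<inter> hit a l \<mu> 0) \<le> (\<integral>x. indicator (B \<inter> hit a l \<mu> 0) x * W a l \<mu> a x \<partial>P)"
    using B_P by (intro measure_le_integral_W) (auto simp: hit_0)
  thus ?case using integral_indicator_W_split[of B "hit a l \<mu> 0" a a l \<mu>] B_P by simp
next
  case (Suc j)
  define k where "k = a + j"
  define G where "G = B - hit a l \<mu> j"
  define T where "T = {x \<in> space P. 1 \<le> W a l \<mu> (Suc k) x}"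
  have G_F: "G \<in> sets (F k)"
    unfolding G_def k_def using sets_F_mono[of a "a + j"] B_F hit_sets_F by auto
  have G_P: "G \<in> sets P" and B_P: "B \<in> sets P" using G_F B_F sets_F_subset by auto
  have "a \<le> Suc k" unfolding k_def by simp
  hence T_P: "T \<in> sets P" unfolding T_def by measurable
  have hit_Suc': "hit a l \<mu> (Suc j) = hit a l \<mu> j \<union> T" unfolding T_def k_def by (simp add: hit_Suc)
  have "B \<inter> hit a l \<mu> (Suc j) = (B \<inter> hit a l \<mu> j) \<union> (G \<inter> T)"
    and "(B \<inter> hit a l \<mu> j) \<inter> (G \<inter> T) = {}"
    by (auto simp: hit_Suc' G_def)
  hence "measure P (B \<inter> hit a l \<mu> (Suc j)) = measure P (B \<inter> hit a l \<mu> j) + measure P (G \<inter> T)"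
    using B_P G_P T_P by (simp add: finite_measure_Union)
  moreover have "B - hit a l \<mu> (Suc j) = G - T" by (auto simp: hit_Suc' G_def)
  moreover have "a + Suc j = Suc k" unfolding k_def by simp
  ultimately have "measure P (B \<inter> hit a l \<mu> (Suc j))
      + (\<integral>x. indicator (B - hit a l \<mu> (Suc j)) x * W a l \<mu> (a + Suc j) x \<partial>P)
    = measure P (B \<inter> hit a l \<mu> j)
      + (measure P (G \<inter> T) + (\<integral>x. indicator (G - T) x * W a l \<mu> (Suc k) x \<partial>P))"
    by simp
  also have "\<dots> \<le> measure P (B \<inter> hit a l \<mu> j)
      + ((\<integral>x. indicator (G \<inter> T) x * W a l \<mu> (Suc k) x \<partial>P)
        + (\<integral>x. indicator (G - T) x * W a l \<mu> (Suc k) x \<partial>P))"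
    using G_P T_P \<open>a \<le> Suc k\<close> by (simp add: measure_le_integral_W T_def)
  also have "\<dots> = measure P (B \<inter> hit a l \<mu> j) + (\<integral>x. indicator G x * W a l \<mu> (Suc k) x \<partial>P)"
    using integral_indicator_W_split[OF G_P T_P \<open>a \<le> Suc k\<close>] by simp
  also have "\<dots> \<le> measure P (B \<inter> hit a l \<mu> j) + (\<integral>x. indicator G x * W a l \<mu> k x \<partial>P)"
    using integral_indicator_W_Suc_le[OF _ G_F lc] unfolding k_def by simp
  also have "\<dots> \<le> (\<integral>x. indicator B x * W a l \<mu> a x \<partial>P)"
    using Suc.IH unfolding k_def G_def .
  finally show ?case .
qed

lemma measure_hit_ever_le:
  assumes B_F: "B \<in> sets (F a)" and lc: "\<And>n. a \<le> n \<Longrightarrow> \<bar>l\<bar> * c (Suc n) \<le> 1"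
  shows "measure P (B \<inter> (\<Union>j. hit a l \<mu> j)) \<le> (\<integral>x. indicator B x * W a l \<mu> a x \<partial>P)"
proof -
  have B_P: "B \<in> sets P" using B_F sets_F_subset by auto
  have "(\<lambda>j. measure P (B \<inter> hit a l \<mu> j)) \<longlonglongrightarrow> measure P (\<Union>j. B \<inter> hit a l \<mu> j)"
  proof (rule finite_Lim_measure_incseq)
    show "incseq (\<lambda>j. B \<inter> hit a l \<mu> j)" by (intro incseq_SucI) (auto simp: hit_Suc)
  qed (use B_P in auto)
  moreover have "measure P (B \<inter> hit a l \<mu> j) \<le> (\<integral>x. indicator B x * W a l \<mu> a x \<partial>P)" for j
  proof -
    have "0 \<le> (\<integral>x. indicator (B - hit a l \<mu> j) x * W a l \<mu> (a + j) x \<partial>P)"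
      by (intro integral_nonneg_AE AE_I2) (simp add: less_imp_le[OF W_pos])
    thus ?thesis using measure_hit_le[OF B_F lc, of \<mu> j] by linarith
  qed
  ultimately show ?thesis by (simp add: LIMSEQ_le_const2)
qed

lemma V_le_before_exit:
  assumes y: "\<forall>n. Xc n y = X n y"
    and close: "\<And>j. a \<le> j \<Longrightarrow> j < i \<Longrightarrow> X j y \<le> (1 + t) * X a y"
    and S: "(\<Sum>k\<in>{a<..i}. (c k)\<^sup>2) \<le> S" and nonneg: "0 \<le> (1 + t) * X a y"
  shows "V a i y \<le> (1 + t) * X a y * S"
proof -
  have "V a i y \<le> (\<Sum>k\<in>{a<..i}. (c k)\<^sup>2 * ((1 + t) * X a y))"
    unfolding V_def using y close by (intro sum_mono mult_left_mono) auto
  also have "\<dots> = (1 + t) * X a y * (\<Sum>k\<in>{a<..i}. (c k)\<^sup>2)"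
    by (simp add: sum_distrib_left mult.commute)
  also have "\<dots> \<le> (1 + t) * X a y * S" using S nonneg by (rule mult_left_mono)
  finally show ?thesis .
qed

text \<open>With \<open>\<mu>\<close> chosen as below, \<open>W\<close> (for \<open>l\<close> or \<open>-l\<close>) reaches 1 at the first time \<open>i\<close>
  at which \<open>X\<close> deviates by more than \<open>t X a\<close>: before that, the compensator is controlled
  by \<open>V_le_before_exit\<close>.\<close>

lemma deviation_imp_hit:
  assumes y: "y \<in> space P" "\<forall>n. Xc n y = X n y"
    and dev: "\<exists>i\<ge>a. t * X a y < \<bar>X i y - X a y\<bar>"
    and S: "\<And>n. (\<Sum>k\<in>{a<..n}. (c k)\<^sup>2) \<le> S" and t: "0 \<le> t" and l: "0 \<le> l"
    and \<mu>: "\<mu> = l * t - l\<^sup>2 * (1 + t) * S"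
  shows "y \<in> (\<Union>j. hit a l \<mu> j) \<union> (\<Union>j. hit a (- l) \<mu> j)"
proof -
  obtain i where i: "a \<le> i" "t * X a y < \<bar>X i y - X a y\<bar>"
    and first: "\<And>j. j < i \<Longrightarrow> \<not> (a \<le> j \<and> t * X a y < \<bar>X j y - X a y\<bar>)"
    using dev exists_least_iff[of "\<lambda>i. a \<le> i \<and> t * X a y < \<bar>X i y - X a y\<bar>"] by blast
  have Xa: "0 < X a y" using X_pos[OF y(1)] .
  have "V a i y \<le> (1 + t) * X a y * S"
  proof (rule V_le_before_exit[OF y(2) _ S])
    fix j
    assume "a \<le> j" "j < i"
    hence "\<bar>X j y - X a y\<bar> \<le> t * X a y" using first by force
    thus "X j y \<le> (1 + t) * X a y" by (simp add: abs_le_iff algebra_simps)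
  qed (use t Xa in simp)
  hence "l\<^sup>2 * V a i y \<le> l\<^sup>2 * ((1 + t) * X a y * S)" by (simp add: mult_left_mono)
  moreover have "l * (t * X a y) - \<mu> * X a y = l\<^sup>2 * ((1 + t) * X a y * S)"
    unfolding \<mu> by (simp add: algebra_simps)
  ultimately have key: "l * (t * X a y) - l\<^sup>2 * V a i y - \<mu> * X a y \<ge> 0" by linarith
  have Xc: "Xc a y = X a y" "Xc i y = X i y" using y(2) by auto
  consider "t * X a y < X i y - X a y" | "t * X a y < X a y - X i y" using i(2) by linarith
  thus ?thesis
  proof cases
    case 1
    have "l * (t * X a y) \<le> l * (X i y - X a y)" using 1 l by (simp add: mult_left_mono)
    hence "1 \<le> W a l \<mu> i y" unfolding W_def Xc using key by simp
    hence "y \<in> hit a l \<mu> (i - a)" unfolding hit_def using y(1) i(1) by auto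
    thus ?thesis by blast
  next
    case 2
    have "l * (t * X a y) \<le> l * (X a y - X i y)" using 2 l by (simp add: mult_left_mono)
    hence "1 \<le> W a (- l) \<mu> i y" unfolding W_def Xc using key by (simp add: algebra_simps)
    hence "y \<in> hit a (- l) \<mu> (i - a)" unfolding hit_def using y(1) i(1) by auto
    thus ?thesis by blast
  qed
qed

lemma integral_indicator_W_start_le:
  assumes B: "B \<in> sets P" and D: "0 < D" and \<mu>: "t\<^sup>2 / (4 * D) \<le> \<mu>"
  shows "(\<integral>x. indicator B x * W a l \<mu> a x \<partial>P) \<le> (\<integral>x. indicator B x * exp (- (t\<^sup>2 / 4 * X a x / D)) \<partial>P)"
proof (rule integral_mono_AE)
  show "integrable P (\<lambda>x. indicator B x * W a l \<mu> a x)"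
    by (rule integrable_indicator_W[OF order_refl B])
  have "0 \<le> t\<^sup>2 / 4 * X a x / D" if "x \<in> space P" for x
    using X_pos[OF that, of a] D by simp
  thus "integrable P (\<lambda>x. indicator B x * exp (- (t\<^sup>2 / 4 * X a x / D)))"
    using B by (intro integrable_const_bound[where B=1]) (auto simp: indicator_def)
  show "AE x in P. indicator B x * W a l \<mu> a x \<le> indicator B x * exp (- (t\<^sup>2 / 4 * X a x / D))"
    using AE_Xc_eq_X AE_space
  proof eventually_elim
    case (elim x)
    have "t\<^sup>2 / 4 * X a x / D = t\<^sup>2 / (4 * D) * X a x" by simp
    also have "\<dots> \<le> \<mu> * Xc a x"
      using mult_right_mono[OF \<mu> less_imp_le[OF X_pos[OF elim(2), of a]]] elim(1) by simp
    finally show ?case by (simp add: W_start indicator_def)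
  qed
qed

lemma measure_deviation_le:
  assumes t: "0 \<le> t" and S: "\<And>n. (\<Sum>k\<in>{a<..n}. (c k)\<^sup>2) \<le> S"
    and b: "\<And>k. a < k \<Longrightarrow> c k \<le> b"
    and D: "D = S + t * max S b" "0 < D" and B_F: "B \<in> sets (F a)"
  shows "measure P (B \<inter> {y \<in> space P. \<exists>i\<ge>a. t * X a y < \<bar>X i y - X a y\<bar>})
    \<le> (\<integral>x. indicator B x * (2 * exp (- (t\<^sup>2 / 4 * X a x / D))) \<partial>P)"
proof -
  define l where "l = t / (2 * D)"
  define \<mu> where "\<mu> = l * t - l\<^sup>2 * (1 + t) * S"
  have S0: "0 \<le> S" using S[of a] by simp
  have l0: "0 \<le> l" unfolding l_def using t D by simp
  have lb: "l * b \<le> 1" and \<mu>_ge: "t\<^sup>2 / (4 * D) \<le> \<mu>"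
    using deviation_parameters[OF t S0 D] unfolding l_def \<mu>_def by auto
  have lc: "\<bar>l\<bar> * c (Suc n) \<le> 1" "\<bar>- l\<bar> * c (Suc n) \<le> 1" if "a \<le> n" for n
  proof -
    have "l * c (Suc n) \<le> l * b" using b[of "Suc n"] that l0 by (simp add: mult_left_mono)
    thus "\<bar>l\<bar> * c (Suc n) \<le> 1" "\<bar>- l\<bar> * c (Suc n) \<le> 1" using l0 lb by simp_all
  qed
  have B_P: "B \<in> sets P" using B_F sets_F_subset by auto
  define U where "U l' = B \<inter> (\<Union>j. hit a l' \<mu> j)" for l'
  have U_sets: "U l' \<in> sets P" for l' unfolding U_def using B_P by auto
  have "measure P (B \<inter> {y \<in> space P. \<exists>i\<ge>a. t * X a y < \<bar>X i y - X a y\<bar>}) \<le> measure P (U l \<union> U (- l))"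
  proof (rule finite_measure_mono_AE)
    show "AE x in P. x \<in> B \<inter> {y \<in> space P. \<exists>i\<ge>a. t * X a y < \<bar>X i y - X a y\<bar>} \<longrightarrow> x \<in> U l \<union> U (- l)"
      using AE_Xc_eq_X
      by eventually_elim (use deviation_imp_hit[OF _ _ _ S t l0 \<mu>_def] in \<open>auto simp: U_def\<close>)
    show "U l \<union> U (- l) \<in> sets P" by (intro sets.Un U_sets)
  qed
  also have "\<dots> \<le> measure P (U l) + measure P (U (- l))"
    by (rule measure_Un_le[OF U_sets U_sets])
  also have "\<dots> \<le> (\<integral>x. indicator B x * W a l \<mu> a x \<partial>P) + (\<integral>x. indicator B x * W a (- l) \<mu> a x \<partial>P)"
    unfolding U_def using B_F lc by (intro add_mono measure_hit_ever_le) auto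
  also have "\<dots> \<le> 2 * (\<integral>x. indicator B x * exp (- (t\<^sup>2 / 4 * X a x / D)) \<partial>P)"
    using integral_indicator_W_start_le[OF B_P D(2) \<mu>_ge, of a] by (simp add: W_start)
  also have "\<dots> = (\<integral>x. indicator B x * (2 * exp (- (t\<^sup>2 / 4 * X a x / D))) \<partial>P)"
    by (simp add: mult.left_commute[of "indicator B _" 2] integral_mult_right_zero)
  finally show ?thesis .
qed

lemma cond_prob_deviation_le:
  assumes t: "0 \<le> t" and S: "\<And>n. (\<Sum>k\<in>{a<..n}. (c k)\<^sup>2) \<le> S"
    and b: "\<And>k. a < k \<Longrightarrow> c k \<le> b" and D: "0 < S + t * max S b"
  shows "AE x in P. cond_prob P (gen_alg P A {a})
      {y \<in> space P. (SUP i\<in>{a..}. ereal \<bar>A i y / Ms i - A a y / Ms a\<bar>) > ereal (t * (A a y / Ms a))} x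
    \<le> 2 * exp (- ((t\<^sup>2 / 4) * (A a x / Ms a) / (S + t * max S b)))"
proof -
  define D where "D = S + t * max S b"
  define G where "G = gen_alg P A {a}"
  define g where "g x = 2 * exp (- (t\<^sup>2 / 4 * X a x / D))" for x
  have dev_eq: "{y \<in> space P. (SUP i\<in>{a..}. ereal \<bar>A i y / Ms i - A a y / Ms a\<bar>) > ereal (t * (A a y / Ms a))}
      = {y \<in> space P. \<exists>i\<ge>a. t * X a y < \<bar>X i y - X a y\<bar>}"
    by (auto simp: less_SUP_iff X_def)
  have "AE x in P. real_cond_exp P G (indicator {y \<in> space P. \<exists>i\<ge>a. t * X a y < \<bar>X i y - X a y\<bar>}) x \<le> g x"
  proof (rule real_cond_exp_indicator_le)
    show "sigma_finite_subalgebra P G"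
      unfolding G_def by (rule sigma_finite_subalgebra_gen_alg[OF prob]) simp
    show "finite_measure P" by (rule finite_measure_axioms)
    show "g \<in> borel_measurable G"
      unfolding g_def G_def X_def using measurable_gen_alg[of a "{a}" A P] by measurable
    have "0 \<le> t\<^sup>2 / 4 * X a x / D" if "x \<in> space P" for x
      using X_pos[OF that, of a] D unfolding D_def by simp
    thus "integrable P g"
      unfolding g_def by (intro integrable_const_bound[where B=2]) auto
    show "measure P (B \<inter> {y \<in> space P. \<exists>i\<ge>a. t * X a y < \<bar>X i y - X a y\<bar>}) \<le> (\<integral>x. indicator B x * g x \<partial>P)"
      if "B \<in> sets G" for B
      using measure_deviation_le[OF t S b D_def D[folded D_def]] that
        sets_gen_alg_mono[of "{a}" "{..a}" P A]
      unfolding g_def G_def F_def by auto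
  qed measurable
  thus ?thesis unfolding cond_prob_def dev_eq G_def g_def D_def X_def .
qed

lemma sum_c_sq_le_suminf:
  assumes "summable (\<lambda>n. (m n / Ms n)\<^sup>2)"
  shows "(\<Sum>k\<in>{a<..n}. (c k)\<^sup>2) \<le> (\<Sum>k. (m (k + Suc a) / Ms (k + Suc a))\<^sup>2)"
proof -
  have "(\<Sum>k\<in>{a<..n}. (c k)\<^sup>2) = (\<Sum>k<n - a. (m (k + Suc a) / Ms (k + Suc a))\<^sup>2)"
    unfolding c_def
    by (rule sum.reindex_bij_witness[of _ "\<lambda>k. k + Suc a" "\<lambda>k. k - Suc a"]) auto
  also have "\<dots> \<le> (\<Sum>k. (m (k + Suc a) / Ms (k + Suc a))\<^sup>2)"
    using assms summable_iff_shift[of "\<lambda>n. (m n / Ms n)\<^sup>2" "Suc a"]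
    by (intro sum_le_suminf) auto
  finally show ?thesis .
qed

lemma c_Suc_sq_le:
  assumes "m (Suc k) \<le> K"
  shows "(c (Suc k))\<^sup>2 \<le> K * (1 / Ms k - 1 / Ms (Suc k))"
proof -
  have M: "0 < Ms k" and q: "0 < m (Suc k)" using Ms_pos m_pos by auto
  have "c (Suc k) \<le> m (Suc k) / Ms k"
    unfolding c_def Ms_Suc using M q by (intro divide_left_mono) auto
  also have "\<dots> \<le> K / Ms k" using assms M by (simp add: divide_right_mono)
  finally have "c (Suc k) \<le> K / Ms k" .
  hence "c (Suc k) * c (Suc k) \<le> K / Ms k * c (Suc k)"
    using c_pos[of "Suc k"] by (intro mult_right_mono) auto
  hence "(c (Suc k))\<^sup>2 \<le> K / Ms k * c (Suc k)" by (simp add: power2_eq_square)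
  also have "\<dots> = K * (1 / Ms k - 1 / Ms (Suc k))"
    unfolding c_def Ms_Suc using M q by (simp add: field_simps)
  finally show ?thesis .
qed

lemma sum_c_sq_le_of_bounded:
  assumes K: "\<And>k. a < k \<Longrightarrow> m k \<le> K"
  shows "(\<Sum>k\<in>{a<..n}. (c k)\<^sup>2) \<le> K / Ms a"
proof (cases "a \<le> n")
  case True
  have "(\<Sum>k\<in>{a<..n}. (c k)\<^sup>2) \<le> K * (1 / Ms a - 1 / Ms n)"
    using True
  proof (induction n rule: dec_induct)
    case (step n)
    have "{a<..Suc n} = insert (Suc n) {a<..n}" using step.hyps by auto
    thus ?case using step.IH c_Suc_sq_le[OF K, of n] step.hyps by (simp add: algebra_simps)
  qed simp
  also have "\<dots> = K / Ms a - K / Ms n" by (simp add: right_diff_distrib)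
  also have "\<dots> \<le> K / Ms a"
    using K[of "Suc a"] m_pos[of "Suc a"] Ms_pos[of n] by simp
  finally show ?thesis .
next
  case False
  thus ?thesis using K[of "Suc a"] m_pos[of "Suc a"] Ms_pos[of a] by simp
qed

lemma c_le_of_bounded:
  assumes K: "\<And>k. a < k \<Longrightarrow> m k \<le> K" and k: "a < k"
  shows "c k \<le> K / Ms a"
proof -
  have "c k \<le> K / Ms k" unfolding c_def using K[OF k] Ms_pos[of k] by (simp add: divide_right_mono)
  also have "\<dots> \<le> K / Ms a"
    using Ms_mono[of a k] k K[OF k] m_pos[of k] Ms_pos[of a] by (intro divide_left_mono) auto
  finally show ?thesis .
qed

lemma cond_prob_deviation_le_summable:
  assumes sum: "summable (\<lambda>n. (m n / Ms n)\<^sup>2)" and t: "0 \<le> t"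
  shows "AE x in P. cond_prob P (gen_alg P A {a})
      {y \<in> space P. (SUP i\<in>{a..}. ereal \<bar>A i y / Ms i - A a y / Ms a\<bar>) > ereal (t * (A a y / Ms a))} x
    \<le> 2 * exp (- ((t\<^sup>2 / 4) * (A a x / Ms a)
          / ((\<Sum>k. (m (k + Suc a) / Ms (k + Suc a))\<^sup>2)
             + t * max (\<Sum>k. (m (k + Suc a) / Ms (k + Suc a))\<^sup>2) (Sup {m n / Ms n | n. n > a}))))"
proof (rule cond_prob_deviation_le[OF t sum_c_sq_le_suminf[OF sum]])
  have bdd: "bdd_above {m n / Ms n | n. n > a}"
    by (rule bdd_aboveI[where M=1]) (use c_le_1 in \<open>auto simp: c_def\<close>)
  show "c k \<le> Sup {m n / Ms n | n. n > a}" if "a < k" for k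
    unfolding c_def using that by (intro cSup_upper[OF _ bdd]) auto
  have "0 < (m n / Ms n)\<^sup>2" for n using m_pos[of n] Ms_pos[of n] by simp
  hence "0 < (\<Sum>k. (m (k + Suc a) / Ms (k + Suc a))\<^sup>2)"
    using sum summable_iff_shift[of "\<lambda>n. (m n / Ms n)\<^sup>2" "Suc a"]
    by (intro suminf_pos) auto
  moreover have "0 \<le> max (\<Sum>k. (m (k + Suc a) / Ms (k + Suc a))\<^sup>2) (Sup {m n / Ms n | n. n > a})"
    using calculation by simp
  ultimately show "0 < (\<Sum>k. (m (k + Suc a) / Ms (k + Suc a))\<^sup>2)
      + t * max (\<Sum>k. (m (k + Suc a) / Ms (k + Suc a))\<^sup>2) (Sup {m n / Ms n | n. n > a})"
    using t by (simp add: add_pos_nonneg)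
qed

lemma cond_prob_deviation_le_bounded:
  assumes bdd: "bdd_above (range m)" and t: "0 \<le> t"
  shows "AE x in P. cond_prob P (gen_alg P A {a})
      {y \<in> space P. (SUP i\<in>{a..}. ereal \<bar>A i y / Ms i - A a y / Ms a\<bar>) > ereal (t * (A a y / Ms a))} x
    \<le> 2 * exp (- (t\<^sup>2 / (4 * (1 + t))) * (A a x / Sup {m n | n. n > a}))"
proof -
  define K where "K = Sup {m n | n. n > a}"
  have "bdd_above {m n | n. n > a}" using bdd by (rule bdd_above_mono) auto
  hence m_le: "m k \<le> K" if "a < k" for k
    unfolding K_def using that by (intro cSup_upper) auto
  have K0: "0 < K" using m_le[of "Suc a"] m_pos[of "Suc a"] by simp
  have D: "0 < K / Ms a + t * max (K / Ms a) (K / Ms a)"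
    using K0 Ms_pos[of a] t by (simp add: add_pos_nonneg)
  have "K / Ms a + t * max (K / Ms a) (K / Ms a) = (1 + t) * (K / Ms a)"
    by (simp add: distrib_right add_divide_distrib)
  hence eq: "- ((t\<^sup>2 / 4) * (A a x / Ms a) / (K / Ms a + t * max (K / Ms a) (K / Ms a)))
      = - (t\<^sup>2 / (4 * (1 + t))) * (A a x / K)" for x
    using K0 Ms_pos[of a] t by (simp add: field_simps)
  show ?thesis
    using cond_prob_deviation_le[OF t sum_c_sq_le_of_bounded[OF m_le] c_le_of_bounded[OF m_le] D]
    unfolding eq unfolding K_def .
qed

end

theorem lemmaA1:
  fixes P :: "'w measure" and A :: "nat \<Rightarrow> 'w \<Rightarrow> real"
    and m :: "nat \<Rightarrow> real" and Ms :: "nat \<Rightarrow> real"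
  assumes prob: "prob_space P"
    and m_pos: "\<And>n. m n > 0"
    and Ms_def: "\<And>n. Ms n = (\<Sum>i\<le>n. m i)"
    and A_meas: "\<And>n. A n \<in> borel_measurable P"
    and A_pos: "\<And>n x. x \<in> space P \<Longrightarrow> A n x > 0"
    and A0: "\<And>x. x \<in> space P \<Longrightarrow> A 0 x \<le> m 0"
    and step: "\<And>n. AE x in P.
        cond_prob P (gen_alg P A {..n}) {y \<in> space P. A (Suc n) y = A n y + m (Suc n)} x
          = A n x / Ms n
      \<and> cond_prob P (gen_alg P A {..n}) {y \<in> space P. A (Suc n) y = A n y} x
          = (Ms n - A n x) / Ms n"
  shows
    "(summable (\<lambda>n. (m n / Ms n)\<^sup>2) \<longrightarrow>
       (\<forall>a t. t \<ge> 0 \<longrightarrow> (AE x in P.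
          cond_prob P (gen_alg P A {a})
            {y \<in> space P. (SUP i\<in>{a..}. ereal \<bar>A i y / Ms i - A a y / Ms a\<bar>) > ereal (t * (A a y / Ms a))} x
          \<le> 2 * exp (- ((t\<^sup>2 / 4) * (A a x / Ms a)
                / ((\<Sum>k. (m (k + Suc a) / Ms (k + Suc a))\<^sup>2)
                   + t * max (\<Sum>k. (m (k + Suc a) / Ms (k + Suc a))\<^sup>2)
                             (Sup {m n / Ms n | n. n > a})))))))
     \<and>
     (bdd_above (range m) \<longrightarrow>
       (\<forall>a t. t \<ge> 0 \<longrightarrow> (AE x in P.
          cond_prob P (gen_alg P A {a})
            {y \<in> space P. (SUP i\<in>{a..}. ereal \<bar>A i y / Ms i - A a y / Ms a\<bar>) > ereal (t * (A a y / Ms a))} x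
          \<le> 2 * exp (- (t\<^sup>2 / (4 * (1 + t))) * (A a x / Sup {m n | n. n > a})))))"
proof -
  interpret urn_process P A m Ms
    by (rule urn_process.intro) (use prob m_pos Ms_def A_meas A_pos step in auto)
  show ?thesis
    using cond_prob_deviation_le_summable cond_prob_deviation_le_bounded by blast
qed

end
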